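(* Let $\Sigma$ be a finite group, $A$ a pseudofield, $\mathfrak m$ a maximal ideal of $A$, $K=A/\mathfrak m$, $L$ an algebraic closure of $K$, $\overline A=\operatorname{Fun}L$, and let $\Phi\colon A\to\overline A$ be the Taylor homomorphism at the identity associated to the composite $A\to K\to L$ (so $A$ is identified with the difference subring $\Phi(A)$ of $\overline A$). If $D$ is a difference closed pseudofield that is a difference subring of $\overline A$ with $\Phi(A)\subseteq D\subseteq\overline A$, then $D=\overline A$.
   Context: A difference ring is a commutative ring with identity with an action of the group $\Sigma$ by ring automorphisms. A pseudofield is an absolutely flat difference ring with no $\Sigma$-stable ideals other than $0$ and itself. $\operatorname{Fun}L$ is the ring of functions $\Sigma\to L$ with pointwise operations and $(\sigma f)(\tau)=f(\sigma^{-1}\tau)$. For a ring homomorphism $\varphi\colon A\to L$, the Taylor homomorphism at the identity $e$ is the unique difference homomorphism $\Phi\colon A\to\operatorname{Fun}L$ with $\Phi(a)(e)=\varphi(a)$, namely $\Phi(a)(\tau)=\varphi(\tau^{-1}a)$. A pseudofield $A$ is difference closed if for every $n$ and every $\Sigma$-stable ideal $\mathfrak a$ of the difference polynomial ring $A\{y_1,\dots,y_n\}$ (polynomial ring in the indeterminates $\sigma y_i$, with $\tau(\sigma y_i)=(\tau\sigma)y_i$) the radical of $\mathfrak a$ equals the set of difference polynomials vanishing at every common zero of $\mathfrak a$ in $A^n$ (evaluation via $\sigma y_i\mapsto\sigma(a_i)$). *)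

theory Defs
  imports "HOL-Library.Poly_Mapping" "HOL-Library.Function_Algebras"
          "HOL-Computational_Algebra.Polynomial"
begin

text \<open>The group Sigma is a type of class group_add (written additively: sigma tau is sigma + tau,
  the identity e is 0, the inverse is uminus). Rings are subsets S of a commutative ring type,
  with operations inherited from the type.\<close>

definition subring_on :: "'r::comm_ring_1 set \<Rightarrow> bool" where
  "subring_on S \<longleftrightarrow> 0 \<in> S \<and> 1 \<in> S \<and> (\<forall>x\<in>S. \<forall>y\<in>S. x + y \<in> S \<and> x - y \<in> S \<and> x * y \<in> S)
     \<and> (\<forall>x\<in>S. - x \<in> S)"

definition diff_ring :: "('g::group_add \<Rightarrow> 'r::comm_ring_1 \<Rightarrow> 'r) \<Rightarrow> 'r set \<Rightarrow> bool" where
  "diff_ring act S \<longleftrightarrow> subring_on S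
     \<and> (\<forall>\<sigma>. \<forall>x\<in>S. act \<sigma> x \<in> S)
     \<and> (\<forall>x\<in>S. act 0 x = x)
     \<and> (\<forall>\<sigma> \<tau>. \<forall>x\<in>S. act (\<sigma> + \<tau>) x = act \<sigma> (act \<tau> x))
     \<and> (\<forall>\<sigma>. act \<sigma> 1 = 1)
     \<and> (\<forall>\<sigma>. \<forall>x\<in>S. \<forall>y\<in>S. act \<sigma> (x + y) = act \<sigma> x + act \<sigma> y \<and> act \<sigma> (x * y) = act \<sigma> x * act \<sigma> y)"

definition ideal_on :: "'r::comm_ring_1 set \<Rightarrow> 'r set \<Rightarrow> bool" where
  "ideal_on S I \<longleftrightarrow> I \<subseteq> S \<and> 0 \<in> I \<and> (\<forall>x\<in>I. \<forall>y\<in>I. x + y \<in> I) \<and> (\<forall>r\<in>S. \<forall>x\<in>I. r * x \<in> I)"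

definition stable :: "('g \<Rightarrow> 'r \<Rightarrow> 'r) \<Rightarrow> 'r set \<Rightarrow> bool" where
  "stable act I \<longleftrightarrow> (\<forall>\<sigma>. \<forall>x\<in>I. act \<sigma> x \<in> I)"

definition maximal_ideal_on :: "'r::comm_ring_1 set \<Rightarrow> 'r set \<Rightarrow> bool" where
  "maximal_ideal_on S m \<longleftrightarrow> ideal_on S m \<and> m \<noteq> S \<and>
     (\<forall>J. ideal_on S J \<and> m \<subseteq> J \<longrightarrow> J = m \<or> J = S)"

text \<open>Absolutely flat (commutative case): von Neumann regular.\<close>
definition absolutely_flat :: "'r::comm_ring_1 set \<Rightarrow> bool" where
  "absolutely_flat S \<longleftrightarrow> (\<forall>a\<in>S. \<exists>x\<in>S. a = a * a * x)"

definition pseudofield :: "('g::group_add \<Rightarrow> 'r::comm_ring_1 \<Rightarrow> 'r) \<Rightarrow> 'r set \<Rightarrow> bool" where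
  "pseudofield act S \<longleftrightarrow> diff_ring act S \<and> absolutely_flat S \<and>
     (\<forall>I. ideal_on S I \<and> stable act I \<longrightarrow> I = {0} \<or> I = S)"

definition fun_act :: "'g::group_add \<Rightarrow> ('g \<Rightarrow> 'l) \<Rightarrow> ('g \<Rightarrow> 'l)" where
  "fun_act \<sigma> f = (\<lambda>\<tau>. f (- \<sigma> + \<tau>))"

definition taylor :: "('g::group_add \<Rightarrow> 'a \<Rightarrow> 'a) \<Rightarrow> ('a \<Rightarrow> 'l) \<Rightarrow> 'a \<Rightarrow> ('g \<Rightarrow> 'l)" where
  "taylor act \<phi> a = (\<lambda>\<tau>. \<phi> (act (- \<tau>) a))"

text \<open>Difference polynomials in y_1..y_n: polynomials in the indeterminates (sigma, i)
  (standing for sigma y_i, i < n), with coefficients in S.\<close>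
type_synonym ('g, 'r) dpoly = "(('g \<times> nat) \<Rightarrow>\<^sub>0 nat) \<Rightarrow>\<^sub>0 'r"

definition dpoly_carrier :: "'r::comm_ring_1 set \<Rightarrow> nat \<Rightarrow> ('g, 'r) dpoly set" where
  "dpoly_carrier S n = {p. (\<forall>M. Poly_Mapping.lookup p M \<in> S) \<and>
      (\<forall>M\<in>Poly_Mapping.keys p. \<forall>v\<in>Poly_Mapping.keys M. snd v < n)}"

definition dpoly_act :: "('g::group_add \<Rightarrow> 'r::comm_ring_1 \<Rightarrow> 'r) \<Rightarrow> 'g \<Rightarrow> ('g, 'r) dpoly \<Rightarrow> ('g, 'r) dpoly" where
  "dpoly_act act \<tau> p = Poly_Mapping.map (act \<tau>)
     (Poly_Mapping.map_key (\<lambda>M. Poly_Mapping.map_key (\<lambda>(\<rho>, j). (\<tau> + \<rho>, j)) M) p)"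

definition mpoly_eval :: "('v \<Rightarrow> 'r::comm_ring_1) \<Rightarrow> (('v \<Rightarrow>\<^sub>0 nat) \<Rightarrow>\<^sub>0 'r) \<Rightarrow> 'r" where
  "mpoly_eval v p = (\<Sum>M\<in>Poly_Mapping.keys p. Poly_Mapping.lookup p M *
       (\<Prod>x\<in>Poly_Mapping.keys M. v x ^ Poly_Mapping.lookup M x))"

definition dpoly_eval :: "('g \<Rightarrow> 'r::comm_ring_1 \<Rightarrow> 'r) \<Rightarrow> (nat \<Rightarrow> 'r) \<Rightarrow> ('g, 'r) dpoly \<Rightarrow> 'r" where
  "dpoly_eval act a p = mpoly_eval (\<lambda>(\<sigma>, i). act \<sigma> (a i)) p"

definition radical_on :: "'r::comm_ring_1 set \<Rightarrow> 'r set \<Rightarrow> 'r set" where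
  "radical_on S I = {x\<in>S. \<exists>k. x ^ k \<in> I}"

definition difference_closed :: "('g::group_add \<Rightarrow> 'r::comm_ring_1 \<Rightarrow> 'r) \<Rightarrow> 'r set \<Rightarrow> bool" where
  "difference_closed act S \<longleftrightarrow> pseudofield act S \<and>
     (\<forall>n. \<forall>\<aa> :: ('g, 'r) dpoly set.
        ideal_on (dpoly_carrier S n) \<aa> \<and> stable (dpoly_act act) \<aa> \<longrightarrow>
        radical_on (dpoly_carrier S n) \<aa> =
          {p \<in> dpoly_carrier S n. \<forall>a. (\<forall>i<n. a i \<in> S) \<longrightarrow>
              (\<forall>q\<in>\<aa>. dpoly_eval act a q = 0) \<longrightarrow> dpoly_eval act a p = 0})"

definition ring_hom_on :: "'a::comm_ring_1 set \<Rightarrow> ('a \<Rightarrow> 'b::comm_ring_1) \<Rightarrow> bool" where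
  "ring_hom_on S f \<longleftrightarrow> f 1 = 1 \<and> (\<forall>x\<in>S. \<forall>y\<in>S. f (x + y) = f x + f y \<and> f (x * y) = f x * f y)"

definition algebraically_closed :: "'l::field itself \<Rightarrow> bool" where
  "algebraically_closed _ \<longleftrightarrow> (\<forall>p :: 'l poly. degree p > 0 \<longrightarrow> (\<exists>x. poly p x = 0))"

definition algebraic_over :: "'l::field set \<Rightarrow> bool" where
  "algebraic_over K \<longleftrightarrow> (\<forall>x::'l. \<exists>p. p \<noteq> 0 \<and> (\<forall>i. coeff p i \<in> K) \<and> poly p x = 0)"

end

theory Submission
  imports Defs
begin

text \<open>
  Write Fun L for the functions Sigma \<rightarrow> L, e for the identity of Sigma (written 0, as
  Sigma is a group_add), and
  fibre D = {d(e) | d \<in> D} for the values of D at the identity.  Since Phi(a)(e) = phi(a),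
  the fibre contains phi(A), over which L is algebraic.

  (1) Evaluation of difference polynomials at a point of (Fun L)^n is a ring homomorphism
      intertwining the action on polynomials with the shift action on Fun L.  Hence the
      polynomials over D vanishing at a point form a proper difference ideal, and since D is
      difference closed this ideal has a zero in D^n: every point of Fun L specialises into D.
  (2) Specialising the indicator delta0 of e, via the equations y^2 = y, y * rho(y) = 0 and
      sum of all rho(y) = 1, shows that delta0 \<in> D.
  (3) Lifting a polynomial over the fibre to a difference polynomial with coefficients
      delta0 * d_i and specialising one of its roots shows that every polynomial over the fibre
      with a root in L has a root in the fibre; splitting off linear factors, the fibre then
      contains everything algebraic over it, so it is all of L.
  (4) Every f \<in> Fun L is the sum of the translates tau(delta0 * d_tau) with d_tau(e) = f(tau),
      so D = Fun L.

  Only the difference closedness of D, the inclusion Phi(A) \<subseteq> D and the algebraicity of L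
  over phi(A) are used.
\<close>

subsection \<open>Evaluating finitely supported polynomials\<close>

definition monomial_value :: "('v \<Rightarrow> 'r::comm_ring_1) \<Rightarrow> ('v \<Rightarrow>\<^sub>0 nat) \<Rightarrow> 'r" where
  "monomial_value v M = (\<Prod>x\<in>Poly_Mapping.keys M. v x ^ Poly_Mapping.lookup M x)"

lemma monomial_value_superset:
  "finite S \<Longrightarrow> Poly_Mapping.keys M \<subseteq> S \<Longrightarrow>
     monomial_value v M = (\<Prod>x\<in>S. v x ^ Poly_Mapping.lookup M x)"
  unfolding monomial_value_def by (rule prod.mono_neutral_left) (auto simp: in_keys_iff)

lemma monomial_value_add: "monomial_value v (M + N) = monomial_value v M * monomial_value v N"
proof -
  let ?S = "Poly_Mapping.keys M \<union> Poly_Mapping.keys N"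
  have "monomial_value v (M + N) = (\<Prod>x\<in>?S. v x ^ Poly_Mapping.lookup (M + N) x)"
    by (rule monomial_value_superset) (auto dest: keys_add[THEN subsetD])
  also have "\<dots> = (\<Prod>x\<in>?S. v x ^ Poly_Mapping.lookup M x) * (\<Prod>x\<in>?S. v x ^ Poly_Mapping.lookup N x)"
    by (simp add: lookup_add power_add prod.distrib)
  also have "\<dots> = monomial_value v M * monomial_value v N"
    by (simp add: monomial_value_superset[of ?S M] monomial_value_superset[of ?S N])
  finally show ?thesis .
qed

lemma mpoly_eval_superset:
  "finite S \<Longrightarrow> Poly_Mapping.keys p \<subseteq> S \<Longrightarrow>
     mpoly_eval v p = (\<Sum>M\<in>S. Poly_Mapping.lookup p M * monomial_value v M)"
  unfolding mpoly_eval_def monomial_value_def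
  by (rule sum.mono_neutral_left) (auto simp: in_keys_iff)

lemma mpoly_eval_single: "mpoly_eval v (Poly_Mapping.single M c) = c * monomial_value v M"
  by (simp add: mpoly_eval_def monomial_value_def)

lemma mpoly_eval_add: "mpoly_eval v (p + q) = mpoly_eval v p + mpoly_eval v q"
proof -
  let ?S = "Poly_Mapping.keys p \<union> Poly_Mapping.keys q"
  have "mpoly_eval v (p + q) = (\<Sum>M\<in>?S. Poly_Mapping.lookup (p + q) M * monomial_value v M)"
    by (rule mpoly_eval_superset) (auto dest: keys_add[THEN subsetD])
  also have "\<dots> = (\<Sum>M\<in>?S. Poly_Mapping.lookup p M * monomial_value v M)
                 + (\<Sum>M\<in>?S. Poly_Mapping.lookup q M * monomial_value v M)"
    by (simp add: lookup_add distrib_right sum.distrib)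
  also have "\<dots> = mpoly_eval v p + mpoly_eval v q"
    by (simp add: mpoly_eval_superset[of ?S p] mpoly_eval_superset[of ?S q])
  finally show ?thesis .
qed

lemma mpoly_eval_zero: "mpoly_eval v 0 = 0"
  by (simp add: mpoly_eval_def)

lemma mpoly_eval_sum: "mpoly_eval v (\<Sum>i\<in>I. f i) = (\<Sum>i\<in>I. mpoly_eval v (f i))"
  by (induction I rule: infinite_finite_induct) (simp_all add: mpoly_eval_zero mpoly_eval_add)

lemma mpoly_eval_minus: "mpoly_eval v (p - q) = mpoly_eval v p - mpoly_eval v q"
  using mpoly_eval_add[of v "p - q" q] by (simp add: algebra_simps)

lemma poly_mapping_sum_terms:
  "p = (\<Sum>M\<in>Poly_Mapping.keys p. Poly_Mapping.single M (Poly_Mapping.lookup p M))"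
  by (rule poly_mapping_eqI) (simp add: lookup_sum lookup_single when_def in_keys_iff)

lemma poly_mapping_mult_terms:
  "p * q = (\<Sum>M\<in>Poly_Mapping.keys p. \<Sum>N\<in>Poly_Mapping.keys q.
      Poly_Mapping.single (M + N) (Poly_Mapping.lookup p M * Poly_Mapping.lookup q N))"
  by (subst poly_mapping_sum_terms[of p], subst poly_mapping_sum_terms[of q])
     (simp add: sum_product mult_single)

lemma mpoly_eval_mult: "mpoly_eval v (p * q) = mpoly_eval v p * mpoly_eval v q"
  by (simp add: poly_mapping_mult_terms[of p q] mpoly_eval_sum mpoly_eval_single monomial_value_add
      mpoly_eval_superset[of "Poly_Mapping.keys p" p] mpoly_eval_superset[of "Poly_Mapping.keys q" q]
      sum_product mult_ac)

lemma mpoly_eval_one: "mpoly_eval v 1 = 1"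
  by (simp add: mpoly_eval_def lookup_one)

lemma mpoly_eval_power: "mpoly_eval v (p ^ k) = mpoly_eval v p ^ k"
  by (induction k) (simp_all add: mpoly_eval_one mpoly_eval_mult)

lemma dpoly_eval_hom:
  "dpoly_eval act b 0 = 0"
  "dpoly_eval act b (p + q) = dpoly_eval act b p + dpoly_eval act b q"
  "dpoly_eval act b (p - q) = dpoly_eval act b p - dpoly_eval act b q"
  "dpoly_eval act b (p * q) = dpoly_eval act b p * dpoly_eval act b q"
  "dpoly_eval act b 1 = 1"
  "dpoly_eval act b (p ^ k) = dpoly_eval act b p ^ k"
  "dpoly_eval act b (\<Sum>i\<in>I. f i) = (\<Sum>i\<in>I. dpoly_eval act b (f i))"
  by (simp_all add: dpoly_eval_def mpoly_eval_zero mpoly_eval_add mpoly_eval_minus mpoly_eval_mult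
      mpoly_eval_one mpoly_eval_power mpoly_eval_sum)

lemma subring_on_mult: "subring_on S \<Longrightarrow> x \<in> S \<Longrightarrow> y \<in> S \<Longrightarrow> x * y \<in> S"
  by (simp add: subring_on_def)

lemma subring_on_sum:
  "subring_on S \<Longrightarrow> (\<And>i. i \<in> I \<Longrightarrow> f i \<in> S) \<Longrightarrow> (\<Sum>i\<in>I. f i) \<in> S"
  by (induction I rule: infinite_finite_induct) (auto simp: subring_on_def)

lemma subring_on_power: "subring_on S \<Longrightarrow> x \<in> S \<Longrightarrow> x ^ k \<in> S"
  by (induction k) (auto simp: subring_on_def)

lemma dpoly_carrier_single:
  "subring_on S \<Longrightarrow> c \<in> S \<Longrightarrow> (\<forall>v\<in>Poly_Mapping.keys M. snd v < n) \<Longrightarrow>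
     Poly_Mapping.single M c \<in> dpoly_carrier S n"
  unfolding dpoly_carrier_def by (auto simp: lookup_single when_def subring_on_def)

lemma dpoly_carrier_add:
  "subring_on S \<Longrightarrow> p \<in> dpoly_carrier S n \<Longrightarrow> q \<in> dpoly_carrier S n \<Longrightarrow>
     p + q \<in> dpoly_carrier S n"
  unfolding dpoly_carrier_def by (simp add: lookup_add subring_on_def) (use keys_add[of p q] in blast)

lemma dpoly_carrier_zero: "subring_on S \<Longrightarrow> 0 \<in> dpoly_carrier S n"
  by (simp add: dpoly_carrier_def subring_on_def)

lemma dpoly_carrier_sum:
  "subring_on S \<Longrightarrow> (\<And>i. i \<in> I \<Longrightarrow> f i \<in> dpoly_carrier S n) \<Longrightarrow>
     (\<Sum>i\<in>I. f i) \<in> dpoly_carrier S n"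
  by (induction I rule: infinite_finite_induct) (simp_all add: dpoly_carrier_zero dpoly_carrier_add)

lemma dpoly_carrier_subring:
  assumes S: "subring_on S"
  shows "subring_on (dpoly_carrier S n)"
proof -
  have mult: "p * q \<in> dpoly_carrier S n"
    if p: "p \<in> dpoly_carrier S n" and q: "q \<in> dpoly_carrier S n" for p q
    unfolding poly_mapping_mult_terms[of p q]
  proof (intro dpoly_carrier_sum[OF S] dpoly_carrier_single[OF S])
    fix M N assume M: "M \<in> Poly_Mapping.keys p" and N: "N \<in> Poly_Mapping.keys q"
    show "Poly_Mapping.lookup p M * Poly_Mapping.lookup q N \<in> S"
      using p q S by (auto simp: dpoly_carrier_def subring_on_def)
    show "\<forall>v\<in>Poly_Mapping.keys (M + N). snd v < n"
      using p q M N keys_add[of M N] unfolding dpoly_carrier_def by blast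
  qed
  have uminus: "- p \<in> dpoly_carrier S n" if "p \<in> dpoly_carrier S n" for p
    using that S by (auto simp: dpoly_carrier_def subring_on_def)
  have "1 \<in> dpoly_carrier S n"
    using S by (auto simp: dpoly_carrier_def subring_on_def lookup_one when_def)
  then show ?thesis
    using mult uminus dpoly_carrier_zero[OF S] dpoly_carrier_add[OF S] dpoly_carrier_add[OF S _ uminus]
    by (auto simp: subring_on_def[of "dpoly_carrier S n"])
qed

definition dvar :: "'g \<Rightarrow> nat \<Rightarrow> ('g, 'r::comm_ring_1) dpoly" where
  "dvar \<rho> i = Poly_Mapping.single (Poly_Mapping.single (\<rho>, i) 1) 1"

lemma dvar_carrier: "subring_on S \<Longrightarrow> i < n \<Longrightarrow> dvar \<rho> i \<in> dpoly_carrier S n"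
  unfolding dvar_def by (rule dpoly_carrier_single) (auto simp: subring_on_def)

lemma dpoly_eval_dvar: "dpoly_eval act b (dvar \<rho> i) = act \<rho> (b i)"
  by (simp add: dvar_def dpoly_eval_def mpoly_eval_single monomial_value_def)

lemma dpoly_eval_const: "dpoly_eval act b (Poly_Mapping.single 0 c) = c"
  by (simp add: dpoly_eval_def mpoly_eval_single monomial_value_def)

lemma fun_sum_apply: "(\<Sum>i\<in>I. f i) x = (\<Sum>i\<in>I. f i x)"
  by (induction I rule: infinite_finite_induct) auto

lemma fun_prod_apply: "(\<Prod>i\<in>I. f i) x = (\<Prod>i\<in>I. f i x)"
  by (induction I rule: infinite_finite_induct) auto

lemma fun_power_apply: "(f ^ k) x = f x ^ k"
  by (induction k) auto

lemma fun_act_apply: "fun_act \<tau> f x = f (- \<tau> + x)"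
  by (simp add: fun_act_def)

lemma fun_act_identity [simp]: "fun_act 0 f = f"
  by (simp add: fun_act_def)

lemma fun_act_compose: "fun_act \<tau> (fun_act \<rho> f) = fun_act (\<tau> + \<rho>) f"
  by (rule ext) (simp only: fun_act_def minus_add add.assoc)

lemma fun_act_zero [simp]: "fun_act \<tau> 0 = 0"
  and fun_act_mult: "fun_act \<tau> (f * g) = fun_act \<tau> f * fun_act \<tau> g"
  and fun_act_sum: "fun_act \<tau> (\<Sum>i\<in>I. h i) = (\<Sum>i\<in>I. fun_act \<tau> (h i))"
  and fun_act_prod: "fun_act \<tau> (\<Prod>i\<in>I. h i) = (\<Prod>i\<in>I. fun_act \<tau> (h i))"
  and fun_act_power: "fun_act \<tau> (f ^ k) = fun_act \<tau> f ^ k"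
  for f g :: "'g::group_add \<Rightarrow> 'l::comm_ring_1"
  by (auto simp: fun_act_def fun_eq_iff fun_sum_apply fun_prod_apply fun_power_apply)

subsection \<open>Shifting difference polynomials commutes with evaluation in Fun L\<close>

lemma lookup_map:
  "Poly_Mapping.lookup (Poly_Mapping.map f p) k
     = (f (Poly_Mapping.lookup p k) when Poly_Mapping.lookup p k \<noteq> 0)"
  by transfer simp

lemma lookup_map_key:
  assumes "inj f"
  shows "Poly_Mapping.lookup (Poly_Mapping.map_key f p) k = Poly_Mapping.lookup p (f k)"
proof -
  have [transfer_rule]: "inj f" by fact
  show ?thesis by transfer simp
qed

definition shift_var :: "'g::group_add \<Rightarrow> 'g \<times> nat \<Rightarrow> 'g \<times> nat" where
  "shift_var \<tau> = (\<lambda>(\<rho>, j). (\<tau> + \<rho>, j))"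

definition shift_monomial :: "'g::group_add \<Rightarrow> ('g \<times> nat \<Rightarrow>\<^sub>0 nat) \<Rightarrow> ('g \<times> nat \<Rightarrow>\<^sub>0 nat)" where
  "shift_monomial \<tau> M = Poly_Mapping.map_key (shift_var \<tau>) M"

lemma inj_shift_var: "inj (shift_var \<tau>)"
  by (auto simp: shift_var_def inj_def)

lemma shift_var_inverse [simp]: "shift_var (- \<tau>) (shift_var \<tau> x) = x"
  by (auto simp: shift_var_def add.assoc[symmetric] split: prod.splits)

lemma lookup_shift_monomial:
  "Poly_Mapping.lookup (shift_monomial \<tau> M) x = Poly_Mapping.lookup M (shift_var \<tau> x)"
  by (simp add: shift_monomial_def lookup_map_key inj_shift_var)

lemma shift_monomial_inverse [simp]: "shift_monomial (- \<tau>) (shift_monomial \<tau> M) = M"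
  by (rule poly_mapping_eqI) (simp add: lookup_shift_monomial shift_var_def split: prod.splits)

lemma shift_monomial_inverse' [simp]: "shift_monomial \<tau> (shift_monomial (- \<tau>) M) = M"
  using shift_monomial_inverse[of "- \<tau>" M] by simp

lemma keys_shift_monomial:
  "Poly_Mapping.keys (shift_monomial (- \<tau>) M) = shift_var \<tau> ` Poly_Mapping.keys M"
  by (auto simp: shift_monomial_def keys_map_key inj_shift_var image_iff)
    (metis shift_var_inverse minus_minus)

lemma lookup_dpoly_act:
  "Poly_Mapping.lookup (dpoly_act fun_act \<tau> p) M
     = fun_act \<tau> (Poly_Mapping.lookup p (shift_monomial \<tau> M))"
proof -
  have inj: "inj (shift_monomial \<tau>)"
    by (metis injI shift_monomial_inverse)
  have "dpoly_act fun_act \<tau> p = Poly_Mapping.map (fun_act \<tau>) (Poly_Mapping.map_key (shift_monomial \<tau>) p)"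
    unfolding dpoly_act_def shift_monomial_def shift_var_def by simp
  then show ?thesis
    by (simp add: lookup_map lookup_map_key[OF inj] when_def)
qed

lemma keys_dpoly_act:
  "Poly_Mapping.keys (dpoly_act fun_act \<tau> p) \<subseteq> shift_monomial (- \<tau>) ` Poly_Mapping.keys p"
proof
  fix M assume "M \<in> Poly_Mapping.keys (dpoly_act fun_act \<tau> p)"
  then have "shift_monomial \<tau> M \<in> Poly_Mapping.keys p"
    by (auto simp: in_keys_iff lookup_dpoly_act)
  then show "M \<in> shift_monomial (- \<tau>) ` Poly_Mapping.keys p"
    by (metis image_eqI minus_minus shift_monomial_inverse)
qed

lemma monomial_value_shift:
  fixes a :: "nat \<Rightarrow> 'g::group_add \<Rightarrow> 'l::comm_ring_1"
  defines "v \<equiv> \<lambda>(\<sigma>, i). fun_act \<sigma> (a i)"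
  shows "monomial_value v (shift_monomial (- \<tau>) M) = fun_act \<tau> (monomial_value v M)"
proof -
  have "monomial_value v (shift_monomial (- \<tau>) M)
      = (\<Prod>x\<in>shift_var \<tau> ` Poly_Mapping.keys M. v x ^ Poly_Mapping.lookup M (shift_var (- \<tau>) x))"
    by (simp add: monomial_value_def keys_shift_monomial lookup_shift_monomial)
  also have "\<dots> = (\<Prod>y\<in>Poly_Mapping.keys M. v (shift_var \<tau> y) ^ Poly_Mapping.lookup M y)"
    by (subst prod.reindex[OF inj_on_subset[OF inj_shift_var subset_UNIV]]) auto
  also have "\<dots> = (\<Prod>y\<in>Poly_Mapping.keys M. fun_act \<tau> (v y ^ Poly_Mapping.lookup M y))"
    by (rule prod.cong) (auto simp: v_def shift_var_def fun_act_power fun_act_compose)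
  also have "\<dots> = fun_act \<tau> (monomial_value v M)"
    by (simp add: monomial_value_def fun_act_prod)
  finally show ?thesis .
qed

lemma dpoly_eval_act:
  fixes a :: "nat \<Rightarrow> 'g::group_add \<Rightarrow> 'l::comm_ring_1"
  shows "dpoly_eval fun_act a (dpoly_act fun_act \<tau> q) = fun_act \<tau> (dpoly_eval fun_act a q)"
proof -
  let ?v = "\<lambda>(\<sigma>, i). fun_act \<sigma> (a i)"
  let ?K = "shift_monomial (- \<tau>) ` Poly_Mapping.keys q"
  have inj: "inj_on (shift_monomial (- \<tau>)) (Poly_Mapping.keys q)"
    by (metis inj_onI minus_minus shift_monomial_inverse)
  have "dpoly_eval fun_act a (dpoly_act fun_act \<tau> q)
      = (\<Sum>M\<in>?K. Poly_Mapping.lookup (dpoly_act fun_act \<tau> q) M * monomial_value ?v M)"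
    unfolding dpoly_eval_def by (rule mpoly_eval_superset) (simp_all add: keys_dpoly_act)
  also have "\<dots> = (\<Sum>M\<in>Poly_Mapping.keys q.
      fun_act \<tau> (Poly_Mapping.lookup q M) * fun_act \<tau> (monomial_value ?v M))"
    by (simp add: sum.reindex[OF inj] lookup_dpoly_act monomial_value_shift)
  also have "\<dots> = fun_act \<tau> (dpoly_eval fun_act a q)"
    by (simp add: dpoly_eval_def mpoly_eval_def monomial_value_def fun_act_sum fun_act_mult)
  finally show ?thesis .
qed

lemma dpoly_carrier_act:
  assumes D: "diff_ring fun_act D" and p: "p \<in> dpoly_carrier D n"
  shows "dpoly_act fun_act \<tau> p \<in> dpoly_carrier D n"
proof -
  have "fun_act \<tau> (Poly_Mapping.lookup p M) \<in> D" for M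
    using D p by (auto simp: diff_ring_def dpoly_carrier_def)
  moreover have "snd v < n"
    if "M \<in> Poly_Mapping.keys p" "v \<in> Poly_Mapping.keys (shift_monomial (- \<tau>) M)" for M v
    using p that by (fastforce simp: keys_shift_monomial dpoly_carrier_def shift_var_def)
  ultimately show ?thesis
    using keys_dpoly_act[of \<tau> p] by (auto simp: dpoly_carrier_def lookup_dpoly_act)
qed

subsection \<open>Points of Fun L specialise to points of a difference closed D\<close>

text \<open>For a point a of (Fun L)^n, the difference polynomials
  over D vanishing at a form a proper difference ideal; since D is difference closed, its
  radical is cut out by its zeros in D^n, so (as 1 is not in it) it has a zero b in D^n.\<close>
lemma difference_closed_specialization:
  fixes D :: "('g::group_add \<Rightarrow> 'l::comm_ring_1) set" and a :: "nat \<Rightarrow> 'g \<Rightarrow> 'l"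
  assumes D_sub: "diff_ring fun_act D" and D_dc: "difference_closed fun_act D"
  shows "\<exists>b. (\<forall>i<n. b i \<in> D) \<and>
     (\<forall>q\<in>dpoly_carrier D n. dpoly_eval fun_act a q = 0 \<longrightarrow> dpoly_eval fun_act b q = 0)"
proof (rule ccontr)
  assume no_zero: "\<not> ?thesis"
  have S: "subring_on (dpoly_carrier D n)"
    using D_sub by (simp add: diff_ring_def dpoly_carrier_subring)
  define I where "I = {q \<in> dpoly_carrier D n. dpoly_eval fun_act a q = 0}"
  have "ideal_on (dpoly_carrier D n) I"
    using S unfolding ideal_on_def I_def subring_on_def
    by (auto simp: dpoly_eval_hom)
  moreover have "stable (dpoly_act fun_act) I"
    unfolding stable_def I_def by (auto simp: dpoly_carrier_act[OF D_sub] dpoly_eval_act)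
  ultimately have radical: "radical_on (dpoly_carrier D n) I =
     {p \<in> dpoly_carrier D n. \<forall>b. (\<forall>i<n. b i \<in> D) \<longrightarrow>
        (\<forall>q\<in>I. dpoly_eval fun_act b q = 0) \<longrightarrow> dpoly_eval fun_act b p = 0}"
    using D_dc unfolding difference_closed_def by blast
  have "1 \<in> radical_on (dpoly_carrier D n) I"
    unfolding radical using no_zero S by (auto simp: I_def subring_on_def)
  then obtain k where "(1 :: ('g, 'g \<Rightarrow> 'l) dpoly) ^ k \<in> I"
    by (auto simp: radical_on_def)
  then have "(1 :: 'g \<Rightarrow> 'l) = 0"
    by (simp add: I_def dpoly_eval_hom)
  then show False
    by (metis one_fun_apply zero_fun_apply zero_neq_one)
qed

subsection \<open>The indicator of the identity lies in D\<close>

definition delta0 :: "'g::zero \<Rightarrow> 'l::{zero, one}" where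
  "delta0 = (\<lambda>x. if x = 0 then 1 else 0)"

lemma delta0_apply: "delta0 x = (if x = 0 then 1 else 0)"
  by (simp add: delta0_def)

lemma fun_act_delta0: "fun_act \<tau> delta0 x = (if x = \<tau> then 1 else 0)"
  by (simp add: fun_act_def delta0_def add_eq_0_iff)

lemma point_indicator:
  fixes c :: "'g::{group_add, finite} \<Rightarrow> 'l::idom"
  assumes idem: "c * c = c"
    and orth: "\<And>\<rho>. \<rho> \<noteq> 0 \<Longrightarrow> c * fun_act \<rho> c = 0"
    and total: "(\<Sum>\<rho>\<in>UNIV. fun_act \<rho> c) = 1"
  shows "\<exists>x0. c = fun_act x0 delta0"
proof -
  have "(\<Sum>\<rho>\<in>UNIV. c (- \<rho>)) = 1"
    using fun_cong[OF total, of 0] by (simp add: fun_sum_apply fun_act_def)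
  then obtain x0 where "c x0 \<noteq> 0"
    by (metis (mono_tags, lifting) sum.neutral zero_neq_one)
  moreover have "c x0 * c x0 = c x0"
    using fun_cong[OF idem, of x0] by simp
  ultimately have c1: "c x0 = 1"
    by (metis mult_cancel_right2)
  have "c z = 0" if "z \<noteq> x0" for z
  proof -
    have "z + - x0 \<noteq> 0"
      using that by (metis add_minus_cancel add.right_neutral minus_add_cancel)
    then have "c z * c (- (z + - x0) + z) = 0"
      using fun_cong[OF orth, of "z + - x0" z] by (simp add: fun_act_def)
    moreover have "- (z + - x0) + z = x0"
      by (simp add: minus_add add.assoc)
    ultimately show ?thesis using c1 by simp
  qed
  then have "c = fun_act x0 delta0"
    using c1 by (auto simp: fun_act_delta0)
  then show ?thesis ..
qed

text \<open>Specialise the point delta0 into D: the specialisation c satisfies the equations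
  y^2 = y, y * (rho y) = 0 for rho \<noteq> 0, and sum of all rho y = 1, which delta0 satisfies,
  hence c is a translate of delta0.\<close>
lemma delta0_in_difference_closed:
  fixes D :: "('g::{group_add, finite} \<Rightarrow> 'l::idom) set"
  assumes D_sub: "diff_ring fun_act D" and D_dc: "difference_closed fun_act D"
  shows "delta0 \<in> D"
proof -
  have S: "subring_on (dpoly_carrier D 1)"
    using D_sub by (simp add: diff_ring_def dpoly_carrier_subring)
  have X: "dvar \<rho> 0 \<in> dpoly_carrier D 1" for \<rho>
    using D_sub by (simp add: diff_ring_def dvar_carrier)
  obtain b where b0: "b 0 \<in> D" and vanish: "\<And>q. q \<in> dpoly_carrier D 1 \<Longrightarrow>
      dpoly_eval fun_act (\<lambda>_. delta0) q = 0 \<Longrightarrow> dpoly_eval fun_act b q = 0"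
    using difference_closed_specialization[OF D_sub D_dc, of 1 "\<lambda>_. delta0"] by auto
  define c where "c = b 0"
  have closed: "p * q \<in> dpoly_carrier D 1" "p - q \<in> dpoly_carrier D 1"
    if "p \<in> dpoly_carrier D 1" "q \<in> dpoly_carrier D 1" for p q
    using S that unfolding subring_on_def by blast+
  have one: "1 \<in> dpoly_carrier D 1"
    using S unfolding subring_on_def by blast
  have "dpoly_eval fun_act b (dvar 0 0 * dvar 0 0 - dvar 0 0) = 0"
    by (rule vanish, intro closed X)
      (simp_all add: dpoly_eval_hom dpoly_eval_dvar delta0_apply fun_eq_iff)
  then have idem: "c * c = c"
    by (simp add: dpoly_eval_hom dpoly_eval_dvar c_def)
  have orth: "c * fun_act \<rho> c = 0" if "\<rho> \<noteq> 0" for \<rho>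
  proof -
    have "dpoly_eval fun_act b (dvar 0 0 * dvar \<rho> 0) = 0"
      by (rule vanish, intro closed X) (use that in \<open>simp_all add: dpoly_eval_hom
          dpoly_eval_dvar fun_act_delta0 delta0_apply fun_eq_iff\<close>)
    then show ?thesis
      by (simp add: dpoly_eval_hom dpoly_eval_dvar c_def)
  qed
  have translates: "(\<Sum>\<rho>\<in>UNIV. fun_act \<rho> (delta0 :: 'g \<Rightarrow> 'l)) = 1"
    by (rule ext) (simp add: fun_sum_apply fun_act_delta0)
  have "dpoly_eval fun_act b ((\<Sum>\<rho>\<in>UNIV. dvar \<rho> 0) - 1) = 0"
    by (rule vanish, intro closed one subring_on_sum[OF S] X)
      (simp_all add: dpoly_eval_hom dpoly_eval_dvar translates)
  then have "(\<Sum>\<rho>\<in>UNIV. fun_act \<rho> c) = 1"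
    by (simp add: dpoly_eval_hom dpoly_eval_dvar c_def)
  then obtain x0 where "c = fun_act x0 delta0"
    using point_indicator[OF idem orth] by blast
  then have "delta0 = fun_act (- x0) c"
    by (simp add: fun_act_compose)
  moreover have "fun_act (- x0) c \<in> D"
    using D_sub b0 by (simp add: diff_ring_def c_def)
  ultimately show ?thesis
    by simp
qed

subsection \<open>The values at the identity form a root closed subring of L\<close>

definition fibre :: "('g::zero \<Rightarrow> 'l) set \<Rightarrow> 'l set" where
  "fibre D = (\<lambda>d. d 0) ` D"

lemma fibre_subring:
  fixes D :: "('g::zero \<Rightarrow> 'l::comm_ring_1) set"
  assumes "subring_on D"
  shows "subring_on (fibre D)"
  using assms unfolding subring_on_def fibre_def
  by (auto simp: image_iff)
    (metis plus_fun_apply minus_apply times_fun_apply zero_fun_apply one_fun_apply uminus_apply)+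

text \<open>Any polynomial over the fibre having a root r in L has a root in the fibre: lift its
  coefficients to delta0 * d_i in D, so that the lifted difference polynomial Q vanishes at
  the constant point r, and specialise that point into D.\<close>
lemma fibre_polynomial_root:
  fixes D :: "('g::{group_add, finite} \<Rightarrow> 'l::idom) set"
  assumes D_sub: "diff_ring fun_act D" and D_dc: "difference_closed fun_act D"
    and coeffs: "\<And>i. coeff p i \<in> fibre D" and root: "poly p r = 0"
  shows "\<exists>s\<in>fibre D. poly p s = 0"
proof -
  have S: "subring_on (dpoly_carrier D 1)" and SD: "subring_on D"
    using D_sub by (simp_all add: diff_ring_def dpoly_carrier_subring)
  have "\<exists>d\<in>D. d 0 = coeff p i" for i
    using coeffs[of i] unfolding fibre_def by (rule imageE) auto
  then obtain d where d: "\<And>i. d i \<in> D \<and> d i 0 = coeff p i"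
    by metis
  define Q :: "('g, 'g \<Rightarrow> 'l) dpoly" where
    "Q = (\<Sum>i\<le>degree p. Poly_Mapping.single 0 (delta0 * d i) * dvar 0 0 ^ i)"
  have "delta0 * d i \<in> D" for i
    using SD d[of i] delta0_in_difference_closed[OF D_sub D_dc] unfolding subring_on_def by blast
  then have Q_carrier: "Q \<in> dpoly_carrier D 1"
    unfolding Q_def
    by (intro subring_on_sum[OF S] subring_on_mult[OF S] subring_on_power[OF S]
        dpoly_carrier_single[OF SD] dvar_carrier[OF SD]) simp_all
  have eval_Q: "dpoly_eval fun_act b Q x = (if x = 0 then poly p (b 0 0) else 0)" for b x
    by (simp add: Q_def dpoly_eval_hom dpoly_eval_const dpoly_eval_dvar fun_sum_apply
        fun_power_apply delta0_apply d poly_altdef)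
  obtain b where b0: "b 0 \<in> D" and vanish: "\<And>q. q \<in> dpoly_carrier D 1 \<Longrightarrow>
      dpoly_eval fun_act (\<lambda>_ _. r) q = 0 \<Longrightarrow> dpoly_eval fun_act b q = 0"
    using difference_closed_specialization[OF D_sub D_dc, of 1 "\<lambda>_ _. r"] by auto
  have "dpoly_eval fun_act b Q = 0"
    by (rule vanish[OF Q_carrier]) (simp add: fun_eq_iff eval_Q root)
  then have "poly p (b 0 0) = 0"
    using eval_Q[of b 0] by simp
  then show ?thesis
    using b0 unfolding fibre_def by blast
qed

lemma poly_in_subring:
  assumes S: "subring_on F" and coeffs: "\<And>i. coeff p i \<in> F" and c: "c \<in> F"
  shows "poly p c \<in> F"
  using coeffs
proof (induction p rule: pCons_induct)
  case 0
  then show ?case using S by (simp add: subring_on_def)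
next
  case (pCons a p)
  then have "a \<in> F" "poly p c \<in> F"
    using pCons.prems[of 0] pCons.prems[of "Suc _"] by simp_all
  then show ?case using S c by (simp add: subring_on_def)
qed

lemma synthetic_div_in_subring:
  assumes S: "subring_on F" and coeffs: "\<And>i. coeff p i \<in> F" and c: "c \<in> F"
  shows "coeff (synthetic_div p c) i \<in> F"
  using coeffs
proof (induction p arbitrary: i rule: pCons_induct)
  case 0
  then show ?case using S by (simp add: subring_on_def)
next
  case (pCons a p)
  have "\<And>i. coeff p i \<in> F" using pCons.prems[of "Suc _"] by simp
  then show ?case
    using pCons.IH poly_in_subring[OF S _ c] by (cases i) simp_all
qed

text \<open>A subring F of a domain such that every polynomial over F with a root has a root in F
  contains every element algebraic over F: split off linear factors with roots in F until
  the factor vanishing at l is reached.\<close>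
lemma root_closed_subring_contains_algebraic:
  fixes F :: "'l::idom set"
  assumes S: "subring_on F"
    and roots: "\<And>q r. (\<And>i. coeff q i \<in> F) \<Longrightarrow> poly q r = 0 \<Longrightarrow> \<exists>s\<in>F. poly q s = 0"
    and p: "p \<noteq> 0" "\<And>i. coeff p i \<in> F" "poly p l = 0"
  shows "l \<in> F"
  using p
proof (induction "degree p" arbitrary: p rule: less_induct)
  case less
  then obtain s where s: "s \<in> F" "poly p s = 0"
    using roots by blast
  define q where "q = synthetic_div p s"
  have p_factor: "p = [:- s, 1:] * q"
    using synthetic_div_correct'[of s p] s by (simp add: q_def)
  show ?case
  proof (cases "l = s")
    case True
    then show ?thesis using s by simp
  next
    case False
    have "poly q l = 0" "q \<noteq> 0"
      using less.prems False p_factor by auto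
    moreover have "degree q < degree p"
    proof -
      have "degree p \<noteq> 0"
      proof
        assume "degree p = 0"
        then obtain c where "p = [:c:]" by (rule degree_eq_zeroE)
        with less.prems(1) s(2) show False by simp
      qed
      then show ?thesis by (simp add: q_def degree_synthetic_div)
    qed
    moreover have "\<And>i. coeff q i \<in> F"
      unfolding q_def by (rule synthetic_div_in_subring[OF S less.prems(2) s(1)])
    ultimately show ?thesis using less.hyps by blast
  qed
qed

subsection \<open>Reconstructing Fun L from D\<close>

lemma fun_decomposition:
  fixes f :: "'g::{group_add, finite} \<Rightarrow> 'l::comm_ring_1"
  assumes "\<And>\<tau>. d \<tau> 0 = f \<tau>"
  shows "f = (\<Sum>\<tau>\<in>UNIV. fun_act \<tau> (delta0 * d \<tau>))"
proof
  fix x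
  have "(\<Sum>\<tau>\<in>UNIV. fun_act \<tau> (delta0 * d \<tau>)) x = (\<Sum>\<tau>\<in>UNIV. if \<tau> = x then f \<tau> else 0)"
    unfolding fun_sum_apply fun_act_mult
    by (rule sum.cong) (auto simp: fun_act_apply delta0_apply add_eq_0_iff assms)
  then show "f x = (\<Sum>\<tau>\<in>UNIV. fun_act \<tau> (delta0 * d \<tau>)) x"
    by simp
qed

lemma diff_ring_eq_UNIV:
  fixes D :: "('g::{group_add, finite} \<Rightarrow> 'l::comm_ring_1) set"
  assumes D_sub: "diff_ring fun_act D" and delta0: "delta0 \<in> D" and fibre: "fibre D = UNIV"
  shows "D = UNIV"
proof -
  have S: "subring_on D" using D_sub by (simp add: diff_ring_def)
  have "f \<in> D" for f :: "'g \<Rightarrow> 'l"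
  proof -
    have "\<exists>d\<in>D. d 0 = f \<tau>" for \<tau>
      using fibre unfolding fibre_def by (metis UNIV_I imageE)
    then obtain d where d: "\<And>\<tau>. d \<tau> \<in> D \<and> d \<tau> 0 = f \<tau>"
      by metis
    have "fun_act \<tau> (delta0 * d \<tau>) \<in> D" for \<tau>
      using S D_sub delta0 d[of \<tau>] by (simp add: subring_on_def diff_ring_def)
    then have "(\<Sum>\<tau>\<in>UNIV. fun_act \<tau> (delta0 * d \<tau>)) \<in> D"
      by (rule subring_on_sum[OF S])
    then show ?thesis
      using fun_decomposition[of d f] d by simp
  qed
  then show ?thesis by blast
qed

theorem proposition4p14:
  fixes act :: "'g::{group_add, finite} \<Rightarrow> 'a::comm_ring_1 \<Rightarrow> 'a"
    and m :: "'a set"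
    and \<phi> :: "'a \<Rightarrow> 'l::field"
    and D :: "('g \<Rightarrow> 'l) set"
  assumes A_pf: "pseudofield act (UNIV :: 'a set)"
    and m_max: "maximal_ideal_on UNIV m"
    and \<phi>_hom: "ring_hom_on UNIV \<phi>"
    and \<phi>_ker: "{a. \<phi> a = 0} = m"
    and L_closed: "algebraically_closed TYPE('l)"
    and L_alg: "algebraic_over (range \<phi>)"
    and D_sub: "diff_ring fun_act D"
    and D_contains: "range (taylor act \<phi>) \<subseteq> D"
    and D_pf: "pseudofield fun_act D"
    and D_dc: "difference_closed fun_act D"
  shows "D = UNIV"
proof -
  have subring: "subring_on (fibre D)"
    using D_sub by (simp add: diff_ring_def fibre_subring)
  have phi_in_fibre: "\<phi> c \<in> fibre D" for c
  proof -
    have "taylor act \<phi> c 0 = \<phi> c"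
      using A_pf by (simp add: taylor_def pseudofield_def diff_ring_def)
    then show ?thesis
      using D_contains unfolding fibre_def by (metis image_eqI rangeI subsetD)
  qed
  have roots: "\<exists>s\<in>fibre D. poly p s = 0"
    if "\<And>i. coeff p i \<in> fibre D" "poly p r = 0" for p r
    using fibre_polynomial_root[OF D_sub D_dc that] .
  have "l \<in> fibre D" for l
  proof -
    obtain p where p: "p \<noteq> 0" "\<And>i. coeff p i \<in> range \<phi>" "poly p l = 0"
      using L_alg unfolding algebraic_over_def by blast
    have coeffs: "coeff p i \<in> fibre D" for i
      using p(2)[of i] phi_in_fibre by auto
    show ?thesis
      using subring roots p(1) coeffs p(3) by (rule root_closed_subring_contains_algebraic)
  qed
  then show ?thesis
    using diff_ring_eq_UNIV[OF D_sub delta0_in_difference_closed[OF D_sub D_dc]] by blast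
qed

end
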